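(* The topology of any first countable paratopological group $G$ is generated by a left-invariant $\overline{\mathsf{dist}}$-continuous quasi-pseudometric; if moreover $G$ is semiregular, this quasi-pseudometric can additionally be chosen right-continuous.
   Context: A paratopological group is a group with a topology making multiplication continuous. Semiregular: every neighborhood $O_x$ of $x$ contains $\mathrm{int}\,\overline{U_x}$ for some neighborhood $U_x$ of $x$. A quasi-pseudometric is $d:G\times G\to[0,\infty)$ with $d(x,x)=0$ and the triangle inequality; left-invariant if $d(zx,zy)=d(x,y)$ for all $x,y,z$; right-continuous if $y\mapsto d(x,y)$ is continuous for each $x$; $\overline{\mathsf{dist}}$-continuous if for every non-empty $A\subset G$ the function $x\mapsto\inf\{\varepsilon>0:x\in\overline{B_d(A,\varepsilon)}\}$ is continuous, where $B_d(A,\varepsilon)=\{y:\exists a\in A\ d(a,y)<\varepsilon\}$. $d$ generates the topology if the balls $B_d(x,\varepsilon)=\{y:d(x,y)<\varepsilon\}$ form a subbase of it. *)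

theory Defs
  imports "HOL-Analysis.Analysis"
begin

text \<open>Groups are written additively via the (not necessarily commutative) type class
  group_add; the group carrier is the whole type and the topology T lives on UNIV.\<close>

definition paratopological_group :: "('a::group_add) topology \<Rightarrow> bool" where
  "paratopological_group T \<longleftrightarrow> topspace T = UNIV \<and>
     continuous_map (prod_topology T T) T (\<lambda>(x, y). x + y)"

definition semiregular :: "'a topology \<Rightarrow> bool" where
  "semiregular T \<longleftrightarrow> (\<forall>x W. openin T W \<and> x \<in> W \<longrightarrow>
     (\<exists>U. openin T U \<and> x \<in> U \<and> T interior_of (T closure_of U) \<subseteq> W))"

definition quasi_pseudometric :: "('a \<Rightarrow> 'a \<Rightarrow> real) \<Rightarrow> bool" where
  "quasi_pseudometric d \<longleftrightarrow> (\<forall>x y. 0 \<le> d x y) \<and> (\<forall>x. d x x = 0) \<and>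
     (\<forall>x y z. d x z \<le> d x y + d y z)"

definition left_invariant :: "('a::group_add \<Rightarrow> 'a \<Rightarrow> real) \<Rightarrow> bool" where
  "left_invariant d \<longleftrightarrow> (\<forall>x y z. d (z + x) (z + y) = d x y)"

definition right_continuous :: "'a topology \<Rightarrow> ('a \<Rightarrow> 'a \<Rightarrow> real) \<Rightarrow> bool" where
  "right_continuous T d \<longleftrightarrow> (\<forall>x. continuous_map T euclideanreal (\<lambda>y. d x y))"

definition qball :: "('a \<Rightarrow> 'a \<Rightarrow> real) \<Rightarrow> 'a \<Rightarrow> real \<Rightarrow> 'a set" where
  "qball d x e = {y. d x y < e}"

definition qball_set :: "('a \<Rightarrow> 'a \<Rightarrow> real) \<Rightarrow> 'a set \<Rightarrow> real \<Rightarrow> 'a set" where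
  "qball_set d A e = {y. \<exists>a\<in>A. d a y < e}"

definition closed_dist :: "'a topology \<Rightarrow> ('a \<Rightarrow> 'a \<Rightarrow> real) \<Rightarrow> 'a set \<Rightarrow> 'a \<Rightarrow> real" where
  "closed_dist T d A x = Inf {e. e > 0 \<and> x \<in> T closure_of (qball_set d A e)}"

definition closed_dist_continuous :: "'a topology \<Rightarrow> ('a \<Rightarrow> 'a \<Rightarrow> real) \<Rightarrow> bool" where
  "closed_dist_continuous T d \<longleftrightarrow>
     (\<forall>A. A \<noteq> {} \<longrightarrow> continuous_map T euclideanreal (closed_dist T d A))"

definition generates_topology :: "'a topology \<Rightarrow> ('a \<Rightarrow> 'a \<Rightarrow> real) \<Rightarrow> bool" where
  "generates_topology T d \<longleftrightarrow>
     T = topology_generated_by {qball d x e | x e. e > 0}"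

end

theory Submission
  imports Defs
begin

text \<open>From a countable base at 0 choose open neighbourhoods U n of 0 with
  U (n+1) + U (n+1) + U (n+1) \<subseteq> U n. Weight g by inf {2^-n | g \<in> U n} and let d x y
  be the infimum of the total weights of finite lists summing to -x + y. This is a left-invariant
  quasi-pseudometric, and the Birkhoff-Kakutani splitting argument (cut the list where its
  partial weight passes half of the total) shows that total weight below 2^-n forces the sum
  into U n; so d-balls around x contain and are contained in left translates x + U n.

  Any left-invariant quasi-pseudometric with open balls is dist-bar-continuous: right translation
  by -x + y is continuous, carries x to y and, by left invariance, moves every point by exactly
  d x y, so y lies in the closure of B(A, e + \<delta>) whenever x lies in that of B(A, e) and
  d x y < \<delta>.

  If G is semiregular, d' x y = dist-bar {x} y, the least e with y in the closure of B(x, e),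
  is again a left-invariant quasi-pseudometric, right-continuous by the previous step. Its balls
  are open and lie in the closures of d-balls, hence inside the regular open sets int (cl U)
  that semiregularity provides.\<close>


section \<open>Left-invariant quasi-pseudometrics from a chain of neighbourhoods\<close>

lemma split_list_halves:
  fixes w :: "'b \<Rightarrow> real"
  assumes "gs \<noteq> []" "0 < c" "sum_list (map w gs) < 2 * c"
  obtains p g r where "gs = p @ g # r" "sum_list (map w p) < c" "sum_list (map w r) < c"
proof -
  define J where "J = {j. j < length gs \<and> sum_list (map w (take j gs)) < c}"
  have "0 \<in> J" "finite J" using assms unfolding J_def by auto
  define j where "j = Max J"
  have "j \<in> J" and j_max: "\<And>i. i \<in> J \<Longrightarrow> i \<le> j"
    using Max_in[OF \<open>finite J\<close>] Max_ge[OF \<open>finite J\<close>] \<open>0 \<in> J\<close> unfolding j_def by blast+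
  then have j: "j < length gs" "sum_list (map w (take j gs)) < c"
    unfolding J_def by auto
  have gs: "gs = take j gs @ gs ! j # drop (Suc j) gs"
    using id_take_nth_drop[OF j(1)] .
  have "sum_list (map w (drop (Suc j) gs)) < c"
  proof (cases "Suc j < length gs")
    case True
    with j_max have "c \<le> sum_list (map w (take (Suc j) gs))"
      unfolding J_def by fastforce
    moreover have "sum_list (map w gs) =
        sum_list (map w (take (Suc j) gs)) + sum_list (map w (drop (Suc j) gs))"
      by (metis append_take_drop_id map_append sum_list_append)
    ultimately show ?thesis using assms(3) by linarith
  qed (use assms in simp)
  with gs j(2) show ?thesis using that by blast
qed

locale triple_chain =
  fixes U :: "nat \<Rightarrow> 'a::group_add set"
  assumes zero_mem [simp]: "0 \<in> U n"
    and add_triple_mem: "\<lbrakk>a \<in> U (Suc n); b \<in> U (Suc n); c \<in> U (Suc n)\<rbrakk> \<Longrightarrow> a + (b + c) \<in> U n"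
begin

lemma Suc_subset: "U (Suc n) \<subseteq> U n"
  using add_triple_mem[of _ n 0 0] by fastforce

lemma antimono: "n \<le> m \<Longrightarrow> U m \<subseteq> U n"
  by (rule lift_Suc_antimono_le[of U]) (use Suc_subset in auto)

text \<open>The element 2 keeps the set non-empty for g outside every U m; for g in U 0 it is never
  the infimum.\<close>

definition weight :: "'a \<Rightarrow> real" where
  "weight g = Inf (insert 2 {(1/2) ^ m | m. g \<in> U m})"

lemma weight_bdd_below: "bdd_below (insert 2 {(1/2::real) ^ m | m. g \<in> U m})"
  by (rule bdd_belowI[of _ 0]) auto

lemma weight_nonneg: "0 \<le> weight g"
  unfolding weight_def by (rule cInf_greatest) auto

lemma weight_le: "g \<in> U m \<Longrightarrow> weight g \<le> (1/2) ^ m"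
  unfolding weight_def by (rule cInf_lower[OF _ weight_bdd_below]) auto

lemma mem_Suc_if_weight_less:
  assumes "weight g < (1/2) ^ n" shows "g \<in> U (Suc n)"
proof -
  obtain y where y: "y \<in> insert 2 {(1/2::real) ^ m | m. g \<in> U m}" "y < (1/2) ^ n"
    using assms unfolding weight_def cInf_less_iff[OF insert_not_empty weight_bdd_below] by blast
  have "(1/2::real) ^ n \<le> 1" by (simp add: power_le_one)
  with y obtain m where m: "y = (1/2) ^ m" "g \<in> U m" by auto
  with y(2) have "Suc n \<le> m" by (simp add: Suc_le_eq)
  with m(2) show ?thesis using antimono by blast
qed

lemma sum_list_weight_nonneg: "0 \<le> sum_list (map weight gs)"
  by (rule sum_list_nonneg) (auto simp: weight_nonneg)

lemma sum_list_mem_if_weight_less: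
  "sum_list (map weight gs) < (1/2) ^ n \<Longrightarrow> sum_list gs \<in> U n"
proof (induction "length gs" arbitrary: gs n rule: less_induct)
  case less
  show ?case
  proof (cases "gs = []")
    case False
    obtain p g r where gs: "gs = p @ g # r" and
      p: "sum_list (map weight p) < (1/2) ^ Suc n" and r: "sum_list (map weight r) < (1/2) ^ Suc n"
      by (rule split_list_halves[OF False, of "(1/2) ^ Suc n" weight]) (use less.prems in auto)
    have "sum_list (map weight gs) = sum_list (map weight p) + weight g + sum_list (map weight r)"
      using gs by simp
    then have "weight g < (1/2) ^ n"
      using less.prems sum_list_weight_nonneg[of p] sum_list_weight_nonneg[of r] by linarith
    then have "g \<in> U (Suc n)" by (rule mem_Suc_if_weight_less)
    moreover have "sum_list p \<in> U (Suc n)" "sum_list r \<in> U (Suc n)"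
      using less.hyps p r gs by auto
    ultimately show ?thesis using gs add_triple_mem by simp
  qed simp
qed

definition chain_dist :: "'a \<Rightarrow> 'a \<Rightarrow> real" where
  "chain_dist x y = Inf {sum_list (map weight gs) | gs. x + sum_list gs = y}"

lemma chain_dist_bdd_below: "bdd_below {sum_list (map weight gs) | gs. x + sum_list gs = y}"
  by (rule bdd_belowI[of _ 0]) (auto simp: sum_list_weight_nonneg)

lemma chain_dist_nonempty: "{sum_list (map weight gs) | gs. x + sum_list gs = y} \<noteq> {}"
proof -
  have "x + sum_list [-x + y] = y" by (simp add: add.assoc[symmetric])
  then show ?thesis by blast
qed

lemma chain_dist_le: "x + sum_list gs = y \<Longrightarrow> chain_dist x y \<le> sum_list (map weight gs)"
  unfolding chain_dist_def by (rule cInf_lower[OF _ chain_dist_bdd_below]) blast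

lemma chain_dist_less_iff:
  "chain_dist x y < c \<longleftrightarrow> (\<exists>gs. x + sum_list gs = y \<and> sum_list (map weight gs) < c)"
  unfolding chain_dist_def cInf_less_iff[OF chain_dist_nonempty chain_dist_bdd_below] by blast

lemma chain_dist_le_weight: "chain_dist x y \<le> weight (-x + y)"
  using chain_dist_le[of x "[-x + y]" y] by (simp add: add.assoc[symmetric])

lemma diff_mem_if_chain_dist_less:
  assumes "chain_dist x y < (1/2) ^ n" shows "-x + y \<in> U n"
proof -
  obtain gs where "x + sum_list gs = y" "sum_list (map weight gs) < (1/2) ^ n"
    using assms chain_dist_less_iff by blast
  then show ?thesis using sum_list_mem_if_weight_less by (auto simp: add.assoc[symmetric])
qed

lemma quasi_pseudometric_chain_dist: "quasi_pseudometric chain_dist"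
  unfolding quasi_pseudometric_def
proof (intro conjI allI)
  show nonneg: "0 \<le> chain_dist x y" for x y
    unfolding chain_dist_def
    by (rule cInf_greatest[OF chain_dist_nonempty]) (auto simp: sum_list_weight_nonneg)
  show "chain_dist x x = 0" for x
    using chain_dist_le[of x "[]" x] nonneg[of x x] by simp
  show "chain_dist x z \<le> chain_dist x y + chain_dist y z" for x y z
  proof (rule field_le_epsilon)
    fix e :: real assume "0 < e"
    then obtain gs1 gs2 where
      gs1: "x + sum_list gs1 = y" "sum_list (map weight gs1) < chain_dist x y + e/2" and
      gs2: "y + sum_list gs2 = z" "sum_list (map weight gs2) < chain_dist y z + e/2"
      using chain_dist_less_iff by (metis half_gt_zero less_add_same_cancel1)
    then have "x + sum_list (gs1 @ gs2) = z" by (simp add: add.assoc[symmetric])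
    then have "chain_dist x z \<le> sum_list (map weight (gs1 @ gs2))" by (rule chain_dist_le)
    then show "chain_dist x z \<le> chain_dist x y + chain_dist y z + e" using gs1 gs2 by simp
  qed
qed

lemma left_invariant_chain_dist: "left_invariant chain_dist"
  unfolding left_invariant_def chain_dist_def by (simp add: add.assoc)

end


section \<open>Translations and neighbourhoods of zero in paratopological groups\<close>

lemma paratopological_group_topspace: "paratopological_group T \<Longrightarrow> topspace T = UNIV"
  by (simp add: paratopological_group_def)

lemma continuous_map_add_left:
  assumes "paratopological_group T" shows "continuous_map T T ((+) c)"
proof -
  have "continuous_map T (prod_topology T T) (\<lambda>y. (c, y))"
    using assms by (intro continuous_map_pairedI) (auto simp: paratopological_group_def)
  from continuous_map_compose[OF this, of T "\<lambda>(x, y). x + y"] assms show ?thesis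
    by (simp add: paratopological_group_def o_def)
qed

lemma continuous_map_add_right:
  assumes "paratopological_group T" shows "continuous_map T T (\<lambda>y. y + c)"
proof -
  have "continuous_map T (prod_topology T T) (\<lambda>y. (y, c))"
    using assms by (intro continuous_map_pairedI) (auto simp: paratopological_group_def)
  from continuous_map_compose[OF this, of T "\<lambda>(x, y). x + y"] assms show ?thesis
    by (simp add: paratopological_group_def o_def)
qed

lemma homeomorphic_map_add_left:
  assumes "paratopological_group T" shows "homeomorphic_map T T ((+) c)"
proof -
  have "homeomorphic_maps T T ((+) c) ((+) (-c))"
    using assms by (simp add: homeomorphic_maps_def continuous_map_add_left add.assoc[symmetric])
  then show ?thesis by (rule homeomorphic_maps_imp_map)
qed

lemma openin_image_add_left:
  "\<lbrakk>paratopological_group T; openin T S\<rbrakk> \<Longrightarrow> openin T ((+) c ` S)"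
  by (simp add: homeomorphic_map_openness[OF homeomorphic_map_add_left] paratopological_group_topspace)

lemma closure_of_image_add_left:
  "paratopological_group T \<Longrightarrow> T closure_of ((+) c ` S) = (+) c ` (T closure_of S)"
  by (simp add: homeomorphic_map_closure_of[OF homeomorphic_map_add_left] paratopological_group_topspace)

lemma openin_preimage_add_right:
  assumes "paratopological_group T" "openin T S" shows "openin T {y. y + c \<in> S}"
  using openin_continuous_map_preimage[OF continuous_map_add_right[OF assms(1)] assms(2)]
  by (simp add: paratopological_group_topspace[OF assms(1)])

lemma zero_neighbourhood_add_pair:
  assumes "paratopological_group T" "openin T W" "0 \<in> W"
  obtains V where "openin T V" "0 \<in> V" "\<And>a b. \<lbrakk>a \<in> V; b \<in> V\<rbrakk> \<Longrightarrow> a + b \<in> W"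
proof -
  have "openin (prod_topology T T) {p \<in> topspace (prod_topology T T). (\<lambda>(x, y). x + y) p \<in> W}"
    using assms by (intro openin_continuous_map_preimage) (auto simp: paratopological_group_def)
  then have "openin (prod_topology T T) {p. fst p + snd p \<in> W}"
    using paratopological_group_topspace[OF assms(1)] by (simp add: case_prod_beta)
  moreover have "(0, 0) \<in> {p. fst p + snd p \<in> W}" using assms(3) by simp
  ultimately obtain V1 V2 where V: "openin T V1" "openin T V2" "0 \<in> V1" "0 \<in> V2"
      "V1 \<times> V2 \<subseteq> {p. fst p + snd p \<in> W}"
    unfolding openin_prod_topology_alt by (elim allE impE) blast+
  show ?thesis
  proof (rule that[of "V1 \<inter> V2"])
    fix a b assume "a \<in> V1 \<inter> V2" "b \<in> V1 \<inter> V2"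
    then show "a + b \<in> W" using V(5) by auto
  qed (use V in auto)
qed

lemma zero_neighbourhood_add_triple:
  assumes "paratopological_group T" "openin T W" "0 \<in> W"
  obtains V where "openin T V" "0 \<in> V"
    "\<And>a b c. \<lbrakk>a \<in> V; b \<in> V; c \<in> V\<rbrakk> \<Longrightarrow> a + (b + c) \<in> W"
proof -
  obtain V1 where V1: "openin T V1" "0 \<in> V1" "\<And>a b. \<lbrakk>a \<in> V1; b \<in> V1\<rbrakk> \<Longrightarrow> a + b \<in> W"
    using zero_neighbourhood_add_pair[OF assms] by blast
  obtain V2 where V2: "openin T V2" "0 \<in> V2" "\<And>a b. \<lbrakk>a \<in> V2; b \<in> V2\<rbrakk> \<Longrightarrow> a + b \<in> V1"
    using zero_neighbourhood_add_pair[OF assms(1) V1(1,2)] by blast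
  have "V2 \<subseteq> V1" using V2(3)[of _ 0] V2(2) by fastforce
  show ?thesis
  proof (rule that[OF V2(1,2)])
    fix a b c assume "a \<in> V2" "b \<in> V2" "c \<in> V2"
    then show "a + (b + c) \<in> W" using V1(3) V2(3) \<open>V2 \<subseteq> V1\<close> by blast
  qed
qed

lemma first_countable_nat_neighbourhood_base:
  fixes X :: "'a topology"
  assumes "first_countable X" "x \<in> topspace X"
  obtains B :: "nat \<Rightarrow> 'a set" where "\<And>n. openin X (B n)" "\<And>n. x \<in> B n"
    "\<And>W. \<lbrakk>openin X W; x \<in> W\<rbrakk> \<Longrightarrow> \<exists>n. B n \<subseteq> W"
proof -
  obtain \<B> where "countable \<B>" and \<B>_open: "\<forall>V\<in>\<B>. openin X V"
      and \<B>_base: "\<forall>W. openin X W \<and> x \<in> W \<longrightarrow> (\<exists>V\<in>\<B>. x \<in> V \<and> V \<subseteq> W)"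
    using assms(1)[unfolded first_countable_def, rule_format, OF assms(2)] by (elim exE conjE)
  define \<B>x where "\<B>x = {V \<in> \<B>. x \<in> V}"
  have "countable \<B>x" using \<open>countable \<B>\<close> unfolding \<B>x_def by simp
  have "\<B>x \<noteq> {}" using \<B>_base assms(2) unfolding \<B>x_def by auto
  show ?thesis
  proof (rule that[of "from_nat_into \<B>x"])
    show "openin X (from_nat_into \<B>x n)" "x \<in> from_nat_into \<B>x n" for n
      using from_nat_into[OF \<open>\<B>x \<noteq> {}\<close>] \<B>_open unfolding \<B>x_def by auto
    show "\<exists>n. from_nat_into \<B>x n \<subseteq> W" if W: "openin X W" "x \<in> W" for W
    proof -
      obtain V where "V \<in> \<B>x" "V \<subseteq> W" using \<B>_base W unfolding \<B>x_def by blast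
      with range_from_nat_into[OF \<open>\<B>x \<noteq> {}\<close> \<open>countable \<B>x\<close>] show ?thesis
        by (metis rangeE)
    qed
  qed
qed

lemma first_countable_triple_chain:
  assumes pg: "paratopological_group T" and "first_countable T"
  obtains U where "triple_chain U" "\<And>n. openin T (U n)"
    "\<And>W. \<lbrakk>openin T W; 0 \<in> W\<rbrakk> \<Longrightarrow> \<exists>n. U n \<subseteq> W"
proof -
  obtain B :: "nat \<Rightarrow> 'a set" where B: "\<And>n. openin T (B n)" "\<And>n. 0 \<in> B n"
      and B_base: "\<And>W. \<lbrakk>openin T W; 0 \<in> W\<rbrakk> \<Longrightarrow> \<exists>n. B n \<subseteq> W"
    by (rule first_countable_nat_neighbourhood_base[OF assms(2), of 0])
      (auto simp: paratopological_group_topspace[OF pg])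
  text \<open>Choosing U (n+1) inside B n makes the chain shrink into every neighbourhood of 0.\<close>
  have "\<exists>U. \<forall>n. (openin T (U n) \<and> 0 \<in> U n) \<and>
      U (Suc n) \<subseteq> B n \<and> (\<forall>a\<in>U (Suc n). \<forall>b\<in>U (Suc n). \<forall>c\<in>U (Suc n). a + (b + c) \<in> U n)"
  proof (rule dependent_nat_choice)
    show "\<exists>V. openin T V \<and> 0 \<in> V"
      using openin_topspace[of T] paratopological_group_topspace[OF pg] by auto
  next
    fix V n assume "openin T V \<and> 0 \<in> V"
    then obtain V' where V': "openin T V'" "0 \<in> V'"
      "\<And>a b c. \<lbrakk>a \<in> V'; b \<in> V'; c \<in> V'\<rbrakk> \<Longrightarrow> a + (b + c) \<in> V \<inter> B n"
      using zero_neighbourhood_add_triple[OF pg, of "V \<inter> B n"] B[of n] by blast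
    have "V' \<subseteq> B n" using V'(3)[of _ 0 0] V'(2) by fastforce
    with V' show "\<exists>V'. (openin T V' \<and> 0 \<in> V') \<and> V' \<subseteq> B n \<and>
        (\<forall>a\<in>V'. \<forall>b\<in>V'. \<forall>c\<in>V'. a + (b + c) \<in> V)"
      by blast
  qed
  then obtain U where U: "\<forall>n. (openin T (U n) \<and> 0 \<in> U n) \<and> U (Suc n) \<subseteq> B n \<and>
      (\<forall>a\<in>U (Suc n). \<forall>b\<in>U (Suc n). \<forall>c\<in>U (Suc n). a + (b + c) \<in> U n)" ..
  show ?thesis
  proof (rule that)
    show "triple_chain U" using U by unfold_locales simp_all
    show "openin T (U n)" for n using U by simp
    show "\<exists>n. U n \<subseteq> W" if W: "openin T W" "0 \<in> W" for W
    proof -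
      obtain n where "B n \<subseteq> W" using B_base[OF W] ..
      then show ?thesis using U by blast
    qed
  qed
qed

context triple_chain
begin

lemma openin_qball_chain_dist:
  assumes pg: "paratopological_group T" and U_open: "\<And>n. openin T (U n)"
  shows "openin T (qball chain_dist x e)"
proof (subst openin_subopen, intro ballI)
  fix y assume "y \<in> qball chain_dist x e"
  then obtain n where n: "chain_dist x y + (1/2) ^ n < e"
    using real_arch_pow_inv[of "e - chain_dist x y" "1/2"] by (auto simp: qball_def algebra_simps)
  have "(+) y ` U n \<subseteq> qball chain_dist x e"
  proof (rule image_subsetI)
    fix u assume "u \<in> U n"
    have "chain_dist x (y + u) \<le> chain_dist x y + chain_dist y (y + u)"
      using quasi_pseudometric_chain_dist by (simp add: quasi_pseudometric_def)
    also have "chain_dist y (y + u) \<le> weight u"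
      using chain_dist_le_weight[of y "y + u"] by (simp add: add.assoc[symmetric])
    also have "weight u \<le> (1/2) ^ n" using \<open>u \<in> U n\<close> by (rule weight_le)
    finally show "y + u \<in> qball chain_dist x e" using n by (simp add: qball_def)
  qed
  moreover have "y \<in> (+) y ` U n" by (rule image_eqI[of _ _ 0]) simp_all
  ultimately show "\<exists>V. openin T V \<and> y \<in> V \<and> V \<subseteq> qball chain_dist x e"
    using openin_image_add_left[OF pg U_open] by blast
qed

lemma qball_chain_dist_subset:
  assumes pg: "paratopological_group T"
    and U_base: "\<And>W. \<lbrakk>openin T W; 0 \<in> W\<rbrakk> \<Longrightarrow> \<exists>n. U n \<subseteq> W"
    and W: "openin T W" "x \<in> W"
  shows "\<exists>e>0. qball chain_dist x e \<subseteq> W"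
proof -
  have "openin T ((+) (-x) ` W)" "0 \<in> (+) (-x) ` W"
    using openin_image_add_left[OF pg W(1)] W(2) by force+
  then obtain n where n: "U n \<subseteq> (+) (-x) ` W" using U_base by blast
  have "qball chain_dist x ((1/2) ^ n) \<subseteq> W"
  proof
    fix y assume "y \<in> qball chain_dist x ((1/2) ^ n)"
    then have "-x + y \<in> (+) (-x) ` W"
      using diff_mem_if_chain_dist_less n by (auto simp: qball_def)
    then show "y \<in> W" by auto
  qed
  then show ?thesis by (intro exI[of _ "(1/2) ^ n"]) simp
qed

end

lemma first_countable_left_invariant_quasi_pseudometric:
  assumes pg: "paratopological_group T" and "first_countable T"
  obtains d where "quasi_pseudometric d" "left_invariant d" "\<And>x e. openin T (qball d x e)"
    "\<And>W x. \<lbrakk>openin T W; x \<in> W\<rbrakk> \<Longrightarrow> \<exists>e>0. qball d x e \<subseteq> W"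
proof -
  obtain U where "triple_chain U" and U_open: "\<And>n. openin T (U n)"
      and U_base: "\<And>W. \<lbrakk>openin T W; 0 \<in> W\<rbrakk> \<Longrightarrow> \<exists>n. U n \<subseteq> W"
    using first_countable_triple_chain[OF assms] by blast
  then interpret triple_chain U by simp
  from quasi_pseudometric_chain_dist left_invariant_chain_dist
    openin_qball_chain_dist[OF pg U_open] qball_chain_dist_subset[OF pg U_base]
  show ?thesis by (rule that)
qed


section \<open>Continuity of the closure distance\<close>

lemma qball_set_singleton [simp]: "qball_set d {x} e = qball d x e"
  by (simp add: qball_set_def qball_def)

lemma closure_qball_set_mono:
  "\<lbrakk>e \<le> e'; x \<in> T closure_of (qball_set d A e)\<rbrakk> \<Longrightarrow> x \<in> T closure_of (qball_set d A e')"
  using closure_of_mono[of "qball_set d A e" "qball_set d A e'"]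
  by (force simp: qball_set_def)

lemma closed_dist_radii_nonempty:
  assumes "topspace T = UNIV" "A \<noteq> {}"
  shows "{e. e > 0 \<and> x \<in> T closure_of (qball_set d A e)} \<noteq> {}"
proof -
  obtain a where "a \<in> A" using assms(2) by blast
  then have "x \<in> qball_set d A (max 1 (d a x + 1))" by (force simp: qball_set_def)
  then have "x \<in> T closure_of (qball_set d A (max 1 (d a x + 1)))"
    using closure_of_subset[of "qball_set d A _" T] assms(1) by auto
  then show ?thesis by (intro ex_in_conv[THEN iffD1] exI) auto
qed

lemma closed_dist_radii_bdd_below: "bdd_below {e::real. e > 0 \<and> P e}"
  by (rule bdd_belowI[of _ 0]) auto

lemma closed_dist_nonneg: "\<lbrakk>topspace T = UNIV; A \<noteq> {}\<rbrakk> \<Longrightarrow> 0 \<le> closed_dist T d A x"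
  unfolding closed_dist_def by (rule cInf_greatest[OF closed_dist_radii_nonempty]) auto

lemma closed_dist_le:
  "\<lbrakk>e > 0; x \<in> T closure_of (qball_set d A e)\<rbrakk> \<Longrightarrow> closed_dist T d A x \<le> e"
  unfolding closed_dist_def by (rule cInf_lower[OF _ closed_dist_radii_bdd_below]) auto

lemma closed_dist_less_iff:
  assumes "topspace T = UNIV" "A \<noteq> {}"
  shows "closed_dist T d A x < c \<longleftrightarrow> (\<exists>e>0. e < c \<and> x \<in> T closure_of (qball_set d A e))"
  unfolding closed_dist_def cInf_less_iff[OF closed_dist_radii_nonempty[OF assms]
      closed_dist_radii_bdd_below]
  by blast

lemma left_invariant_shift: "left_invariant d \<Longrightarrow> d x (x + v) = d 0 v"
  unfolding left_invariant_def by (metis add_0_right)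

lemma in_closure_qball_set_add:
  assumes pg: "paratopological_group T" and q: "quasi_pseudometric d" and li: "left_invariant d"
    and x: "x \<in> T closure_of (qball_set d A e)" and dxy: "d x y < \<delta>"
  shows "y \<in> T closure_of (qball_set d A (e + \<delta>))"
  unfolding in_closure_of
proof (intro conjI allI impI)
  show "y \<in> topspace T" using paratopological_group_topspace[OF pg] by simp
  fix V assume V: "y \<in> V \<and> openin T V"
  define v where "v = -x + y"
  have xv: "x + v = y" unfolding v_def by (simp add: add.assoc[symmetric])
  have "openin T {w. w + v \<in> V}" "x \<in> {w. w + v \<in> V}"
    using openin_preimage_add_right[OF pg] V xv by auto
  then obtain w where w: "w \<in> qball_set d A e" "w + v \<in> V"
    using x[unfolded in_closure_of, THEN conjunct2, rule_format, of "{w. w + v \<in> V}"] by auto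
  then obtain a where a: "a \<in> A" "d a w < e" by (auto simp: qball_set_def)
  have "d a (w + v) \<le> d a w + d w (w + v)"
    using q by (simp add: quasi_pseudometric_def)
  also have "d w (w + v) = d x y"
    using left_invariant_shift[OF li, of w v] left_invariant_shift[OF li, of x v] xv by simp
  finally have "d a (w + v) < e + \<delta>" using a dxy by simp
  then show "\<exists>z. z \<in> qball_set d A (e + \<delta>) \<and> z \<in> V" using a w by (auto simp: qball_set_def)
qed

lemma openin_closed_dist_less:
  assumes pg: "paratopological_group T" and q: "quasi_pseudometric d" and li: "left_invariant d"
    and balls: "\<And>x e. openin T (qball d x e)" and A: "A \<noteq> {}"
  shows "openin T {x. closed_dist T d A x < c}"
proof (subst openin_subopen, intro ballI)
  have top: "topspace T = UNIV" using paratopological_group_topspace[OF pg] .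
  fix x assume "x \<in> {x. closed_dist T d A x < c}"
  then obtain e where e: "e > 0" "e < c" "x \<in> T closure_of (qball_set d A e)"
    using closed_dist_less_iff[OF top A] by auto
  define \<delta> where "\<delta> = (c - e) / 2"
  have \<delta>: "\<delta> > 0" "e + \<delta> < c" using e unfolding \<delta>_def by (auto simp: field_simps)
  have "qball d x \<delta> \<subseteq> {x. closed_dist T d A x < c}"
  proof
    fix y assume "y \<in> qball d x \<delta>"
    then have "y \<in> T closure_of (qball_set d A (e + \<delta>))"
      using in_closure_qball_set_add[OF pg q li e(3)] by (simp add: qball_def)
    then have "closed_dist T d A y \<le> e + \<delta>" using e(1) \<delta>(1) by (intro closed_dist_le) auto
    then show "y \<in> {x. closed_dist T d A x < c}" using \<delta>(2) by simp
  qed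
  moreover have "x \<in> qball d x \<delta>" using \<delta>(1) q by (simp add: qball_def quasi_pseudometric_def)
  ultimately show "\<exists>U. openin T U \<and> x \<in> U \<and> U \<subseteq> {x. closed_dist T d A x < c}"
    using balls by blast
qed

lemma openin_closed_dist_greater:
  assumes top: "topspace T = UNIV" and A: "A \<noteq> {}"
  shows "openin T {x. c < closed_dist T d A x}"
proof (cases "c < 0")
  case True
  then show ?thesis
    using closed_dist_nonneg[OF assms] openin_topspace[of T] top by (simp add: less_le_trans)
next
  case False
  have "{x. c < closed_dist T d A x} =
      (\<Union>e\<in>{e. c < e}. topspace T - T closure_of (qball_set d A e))"
  proof (intro set_eqI iffI)
    fix x assume "x \<in> {x. c < closed_dist T d A x}"
    define m where "m = (c + closed_dist T d A x) / 2"
    have m: "c < m" "m < closed_dist T d A x" using \<open>x \<in> _\<close> unfolding m_def by auto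
    then have "x \<notin> T closure_of (qball_set d A m)"
      using False closed_dist_le[of m x T d A] by fastforce
    with m(1) top show "x \<in> (\<Union>e\<in>{e. c < e}. topspace T - T closure_of (qball_set d A e))"
      by blast
  next
    fix x assume "x \<in> (\<Union>e\<in>{e. c < e}. topspace T - T closure_of (qball_set d A e))"
    then obtain e where "c < e" "x \<notin> T closure_of (qball_set d A e)" by blast
    then have "\<not> closed_dist T d A x < e"
      using closed_dist_less_iff[OF top A] closure_qball_set_mono by (metis less_imp_le)
    then show "x \<in> {x. c < closed_dist T d A x}" using \<open>c < e\<close> by simp
  qed
  moreover have "openin T (\<Union>e\<in>{e. c < e}. topspace T - T closure_of (qball_set d A e))"
    by (intro openin_Union) auto
  ultimately show ?thesis by simp
qed

lemma closed_dist_continuous_if_openin_qball: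
  assumes pg: "paratopological_group T" and q: "quasi_pseudometric d" and li: "left_invariant d"
    and balls: "\<And>x e. openin T (qball d x e)"
  shows "closed_dist_continuous T d"
  unfolding closed_dist_continuous_def continuous_map_upper_lower_semicontinuous_lt
    paratopological_group_topspace[OF pg]
  using openin_closed_dist_greater[OF paratopological_group_topspace[OF pg]]
    openin_closed_dist_less[OF assms]
  by simp

lemma generates_topologyI:
  assumes q: "quasi_pseudometric d" and balls: "\<And>x e. openin T (qball d x e)"
    and nhds: "\<And>W x. \<lbrakk>openin T W; x \<in> W\<rbrakk> \<Longrightarrow> \<exists>e>0. qball d x e \<subseteq> W"
  shows "generates_topology T d"
  unfolding generates_topology_def topology_eq openin_topology_generated_by_iff
proof (intro allI iffI)
  let ?B = "{qball d x e | x e. e > 0}"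
  fix S assume "openin T S"
  have "S = \<Union>{B \<in> ?B. B \<subseteq> S}"
  proof (intro set_eqI iffI)
    fix x assume "x \<in> S"
    then obtain e where "e > 0" "qball d x e \<subseteq> S" using nhds[OF \<open>openin T S\<close>] by blast
    moreover have "x \<in> qball d x e"
      using \<open>e > 0\<close> q by (simp add: qball_def quasi_pseudometric_def)
    ultimately show "x \<in> \<Union>{B \<in> ?B. B \<subseteq> S}" by blast
  qed blast
  moreover have "generate_topology_on ?B (\<Union>{B \<in> ?B. B \<subseteq> S})"
    by (rule generate_topology_on.UN) (auto intro: generate_topology_on.Basis)
  ultimately show "generate_topology_on ?B S" by simp
next
  fix S assume "generate_topology_on {qball d x e | x e. e > 0} S"
  then show "openin T S"
    by (induction rule: generate_topology_on.induct) (auto intro: balls)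
qed


section \<open>Semiregular groups\<close>

lemma closure_qball_trans:
  assumes pg: "paratopological_group T" and q: "quasi_pseudometric d" and li: "left_invariant d"
    and "y \<in> T closure_of (qball d x a)" "z \<in> T closure_of (qball d y b)"
  shows "z \<in> T closure_of (qball d x (a + b))"
proof -
  have "qball d y b \<subseteq> T closure_of (qball d x (a + b))"
    using in_closure_qball_set_add[OF pg q li, of y "{x}" a] assms(4) by (auto simp: qball_def)
  then have "T closure_of (qball d y b) \<subseteq> T closure_of (qball d x (a + b))"
    by (rule closure_of_minimal) simp
  then show ?thesis using assms(5) by blast
qed

lemma quasi_pseudometric_closed_dist_singleton:
  assumes pg: "paratopological_group T" and q: "quasi_pseudometric d" and li: "left_invariant d"
  shows "quasi_pseudometric (\<lambda>x. closed_dist T d {x})"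
  unfolding quasi_pseudometric_def
proof (intro conjI allI)
  have top: "topspace T = UNIV" using paratopological_group_topspace[OF pg] .
  show "0 \<le> closed_dist T d {x} y" for x y by (rule closed_dist_nonneg[OF top]) simp
  show "closed_dist T d {x} x = 0" for x
  proof (rule antisym)
    show "closed_dist T d {x} x \<le> 0"
    proof (rule field_le_epsilon)
      fix e :: real assume "0 < e"
      then have "x \<in> T closure_of (qball d x e)"
        using q closure_of_subset[of "qball d x e" T] top
        by (auto simp: qball_def quasi_pseudometric_def)
      with \<open>0 < e\<close> show "closed_dist T d {x} x \<le> 0 + e" by (simp add: closed_dist_le)
    qed
  qed (rule closed_dist_nonneg[OF top], simp)
  show "closed_dist T d {x} z \<le> closed_dist T d {x} y + closed_dist T d {y} z" for x y z
  proof (rule field_le_epsilon)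
    fix e :: real assume "0 < e"
    then obtain a where a: "a < closed_dist T d {x} y + e/2" "0 < a" "y \<in> T closure_of (qball d x a)"
      using closed_dist_less_iff[OF top, of "{x}" d y "closed_dist T d {x} y + e/2"] by auto
    obtain b where b: "b < closed_dist T d {y} z + e/2" "0 < b" "z \<in> T closure_of (qball d y b)"
      using \<open>0 < e\<close> closed_dist_less_iff[OF top, of "{y}" d z "closed_dist T d {y} z + e/2"] by auto
    have "closed_dist T d {x} z \<le> a + b"
      using closure_qball_trans[OF pg q li a(3) b(3)] a(2) b(2) by (intro closed_dist_le) auto
    with a(1) b(1) show "closed_dist T d {x} z \<le> closed_dist T d {x} y + closed_dist T d {y} z + e"
      by simp
  qed
qed

lemma qball_add_left:
  assumes "left_invariant d" shows "qball d (z + x) e = (+) z ` qball d x e"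
proof (intro set_eqI iffI)
  fix w assume "w \<in> qball d (z + x) e"
  moreover have "d (z + x) (z + (-z + w)) = d x (-z + w)"
    using assms unfolding left_invariant_def by blast
  ultimately have "-z + w \<in> qball d x e" by (simp add: qball_def add.assoc[symmetric])
  then show "w \<in> (+) z ` qball d x e" by (rule image_eqI[rotated]) (simp add: add.assoc[symmetric])
next
  fix w assume "w \<in> (+) z ` qball d x e"
  then show "w \<in> qball d (z + x) e"
    using assms unfolding left_invariant_def by (auto simp: qball_def)
qed

lemma left_invariant_closed_dist_singleton:
  assumes pg: "paratopological_group T" and li: "left_invariant d"
  shows "left_invariant (\<lambda>x. closed_dist T d {x})"
proof -
  have "z + y \<in> T closure_of (qball d (z + x) e) \<longleftrightarrow> y \<in> T closure_of (qball d x e)" for x y z e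
    by (simp add: qball_add_left[OF li] closure_of_image_add_left[OF pg] inj_image_mem_iff)
  then show ?thesis by (simp add: left_invariant_def closed_dist_def)
qed

lemma qball_closed_dist_singleton_subset:
  assumes "topspace T = UNIV"
  shows "qball (\<lambda>x. closed_dist T d {x}) x e \<subseteq> T closure_of (qball d x e)"
proof
  fix y assume "y \<in> qball (\<lambda>x. closed_dist T d {x}) x e"
  then obtain e' where "e' < e" "y \<in> T closure_of (qball d x e')"
    using closed_dist_less_iff[OF assms, of "{x}"] by (auto simp: qball_def)
  then show "y \<in> T closure_of (qball d x e)"
    using closure_qball_set_mono[of e' e y T d "{x}"] by simp
qed

lemma semiregular_right_continuous_quasi_pseudometric:
  assumes pg: "paratopological_group T" and "semiregular T"
    and q: "quasi_pseudometric d" and li: "left_invariant d"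
    and balls: "\<And>x e. openin T (qball d x e)"
    and nhds: "\<And>W x. \<lbrakk>openin T W; x \<in> W\<rbrakk> \<Longrightarrow> \<exists>e>0. qball d x e \<subseteq> W"
  obtains d' where "quasi_pseudometric d'" "left_invariant d'" "right_continuous T d'"
    "\<And>x e. openin T (qball d' x e)"
    "\<And>W x. \<lbrakk>openin T W; x \<in> W\<rbrakk> \<Longrightarrow> \<exists>e>0. qball d' x e \<subseteq> W"
proof
  let ?d' = "\<lambda>x. closed_dist T d {x}"
  have top: "topspace T = UNIV" using paratopological_group_topspace[OF pg] .
  show "quasi_pseudometric ?d'" "left_invariant ?d'"
    using quasi_pseudometric_closed_dist_singleton[OF pg q li]
      left_invariant_closed_dist_singleton[OF pg li] .
  show "right_continuous T ?d'"
    using closed_dist_continuous_if_openin_qball[OF pg q li balls]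
    by (simp add: right_continuous_def closed_dist_continuous_def)
  show balls': "openin T (qball ?d' x e)" for x e
    using openin_closed_dist_less[OF pg q li balls] by (simp add: qball_def)
  show "\<exists>e>0. qball ?d' x e \<subseteq> W" if W: "openin T W" "x \<in> W" for W x
  proof -
    obtain U where U: "openin T U" "x \<in> U" "T interior_of (T closure_of U) \<subseteq> W"
      using \<open>semiregular T\<close> W unfolding semiregular_def by blast
    obtain e where "e > 0" "qball d x e \<subseteq> U" using nhds[OF U(1,2)] by blast
    then have "qball ?d' x e \<subseteq> T closure_of U"
      using qball_closed_dist_singleton_subset[OF top, of d x e] closure_of_mono by blast
    then have "qball ?d' x e \<subseteq> T interior_of (T closure_of U)"
      using balls' by (rule interior_of_maximal)
    with \<open>e > 0\<close> U(3) show ?thesis by blast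
  qed
qed

theorem corollary7p6:
  fixes T :: "('a::group_add) topology"
  assumes "paratopological_group T" and "first_countable T"
  shows "(\<exists>d. quasi_pseudometric d \<and> left_invariant d \<and> closed_dist_continuous T d
              \<and> generates_topology T d)
       \<and> (semiregular T \<longrightarrow>
          (\<exists>d. quasi_pseudometric d \<and> left_invariant d \<and> closed_dist_continuous T d
              \<and> right_continuous T d \<and> generates_topology T d))"
proof (intro conjI impI)
  obtain d where d: "quasi_pseudometric d" "left_invariant d" "\<And>x e. openin T (qball d x e)"
      "\<And>W x. \<lbrakk>openin T W; x \<in> W\<rbrakk> \<Longrightarrow> \<exists>e>0. qball d x e \<subseteq> W"
    using first_countable_left_invariant_quasi_pseudometric[OF assms] by blast
  show "\<exists>d. quasi_pseudometric d \<and> left_invariant d \<and> closed_dist_continuous T d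
      \<and> generates_topology T d"
    using d closed_dist_continuous_if_openin_qball[OF assms(1) d(1-3)]
      generates_topologyI[OF d(1,3,4)] by blast
  assume "semiregular T"
  then obtain d' where d': "quasi_pseudometric d'" "left_invariant d'" "right_continuous T d'"
      "\<And>x e. openin T (qball d' x e)"
      "\<And>W x. \<lbrakk>openin T W; x \<in> W\<rbrakk> \<Longrightarrow> \<exists>e>0. qball d' x e \<subseteq> W"
    using semiregular_right_continuous_quasi_pseudometric[OF assms(1) _ d] by blast
  show "\<exists>d. quasi_pseudometric d \<and> left_invariant d \<and> closed_dist_continuous T d
      \<and> right_continuous T d \<and> generates_topology T d"
    using d' closed_dist_continuous_if_openin_qball[OF assms(1) d'(1,2,4)]
      generates_topologyI[OF d'(1,4,5)] by blast
qed

end
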